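(* Let $z\in(0,1)\setminus\mathbb{Q}$ and suppose $z\in[r_1,r_2]$ for rationals $r_1,r_2\in(0,1)$ whose continued fraction expansions have one of the two forms $$\text{(i)}\quad r_1=[(2)^{2k-1},(2,1)^\ell,s,a_1,\dots,a_{n_1},\infty],\qquad r_2=[(2)^{2k-1},b_1,\dots,b_{n_2},\infty],$$ $$\text{(ii)}\quad r_1=[(2)^{2k},a_1,\dots,a_{n_1},\infty],\qquad r_2=[(2)^{2k},(2,1)^\ell,s,b_1,\dots,b_{n_2},\infty],$$ where $k\ge1$, $\ell\ge0$, $s\ge3$ are integers and $a_i,b_i$ are positive integers ($n_1,n_2\ge 0$). Then $z\notin\mathcal{B}_2$.
   Context: For irrational $x\in(0,1)$, $x=[a_1(x),a_2(x),\dots]$ denotes its simple continued fraction expansion. For positive integers $c_1,\dots,c_n$, $[c_1,\dots,c_n,\infty]$ denotes the rational number $\cfrac{1}{c_1+\cfrac{1}{\ddots+\cfrac{1}{c_n}}}$. The notation $(c_1,\dots,c_m)^\ell$ denotes the block $c_1,\dots,c_m$ repeated $\ell$ times (empty if $\ell=0$), and $(c)^\ell$ denotes $c$ repeated $\ell$ times. $\mathcal{B}_2$ is the set of irrational $x\in(0,1)$ with $a_k(x)\le2$ for all $k\ge1$. *)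

theory Defs
  imports Complex_Main
begin

definition gauss_map :: "real \<Rightarrow> real" where
  "gauss_map x = 1 / x - of_int \<lfloor>1 / x\<rfloor>"

text \<open>k-th partial quotient a_k(x) (k \<ge> 1) of the simple continued fraction of x in (0,1).\<close>
definition cf_digit :: "real \<Rightarrow> nat \<Rightarrow> int" where
  "cf_digit x k = \<lfloor>1 / (gauss_map ^^ (k - 1)) x\<rfloor>"

definition B2 :: "real set" where
  "B2 = {x. 0 < x \<and> x < 1 \<and> x \<notin> \<rat> \<and> (\<forall>k\<ge>1. cf_digit x k \<le> 2)}"

text \<open>Finite continued fraction [c_1,...,c_n,\<infinity>] = 1/(c_1 + 1/(... + 1/c_n)); [\<infinity>] = 0.\<close>
fun cf_fin :: "nat list \<Rightarrow> real" where
  "cf_fin [] = 0"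
| "cf_fin (c # cs) = 1 / (real c + cf_fin cs)"

end

(* A point z of B2 lying between r1 and r2 must share their common prefix (2)^n, so the n-th
   Gauss iterate of z, again in B2, lies between the two tails; by parity of n it lies at or
   below the tail [(2,1)^l, s, ...]. But every point of B2 is strictly above such a tail. *)
theory Submission
  imports Defs
begin

lemma cf_digit_gauss_map:
  assumes "k \<ge> 1"
  shows "cf_digit (gauss_map x) k = cf_digit x (Suc k)"
proof -
  obtain j where "k = Suc j" using assms by (cases k) auto
  then show ?thesis by (simp add: cf_digit_def funpow_Suc_right del: funpow.simps)
qed

lemma gauss_map_irrational:
  assumes "x \<notin> \<rat>"
  shows "gauss_map x \<notin> \<rat>"
proof
  assume "gauss_map x \<in> \<rat>"
  moreover have "1 / x = gauss_map x + of_int \<lfloor>1 / x\<rfloor>" by (simp add: gauss_map_def)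
  ultimately have "1 / x \<in> \<rat>" by (metis Rats_add Rats_of_int)
  then have "inverse (1 / x) \<in> \<rat>" by (rule Rats_inverse)
  with assms show False by simp
qed

lemma B2_bounds:
  assumes "z \<in> B2"
  shows "0 < z" "z < 1"
  using assms by (simp_all add: B2_def)

lemma gauss_map_in_B2:
  assumes "z \<in> B2"
  shows "gauss_map z \<in> B2"
proof -
  have z: "z \<notin> \<rat>" "\<forall>k\<ge>1. cf_digit z k \<le> 2" using assms by (auto simp: B2_def)
  have irr: "gauss_map z \<notin> \<rat>" using z(1) by (rule gauss_map_irrational)
  have "0 \<le> gauss_map z" "gauss_map z < 1" unfolding gauss_map_def by linarith+
  moreover have "gauss_map z \<noteq> 0" using irr by auto
  moreover have "cf_digit (gauss_map z) k \<le> 2" if "k \<ge> 1" for k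
    using z(2) that by (simp add: cf_digit_gauss_map)
  ultimately show ?thesis using irr by (simp add: B2_def)
qed

lemma gauss_map_funpow_in_B2: "z \<in> B2 \<Longrightarrow> (gauss_map ^^ n) z \<in> B2"
  by (induction n) (simp_all add: gauss_map_in_B2)

lemma B2_inverse_cases:
  assumes "z \<in> B2"
  obtains "1 / z = 1 + gauss_map z" | "1 / z = 2 + gauss_map z"
proof -
  have "1 < 1 / z" using B2_bounds[OF assms] by simp
  moreover have "cf_digit z 1 \<le> 2" using assms by (simp add: B2_def)
  ultimately have "\<lfloor>1 / z\<rfloor> = 1 \<or> \<lfloor>1 / z\<rfloor> = 2" by (simp add: cf_digit_def) linarith
  moreover have "1 / z = \<lfloor>1 / z\<rfloor> + gauss_map z" by (simp add: gauss_map_def)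
  ultimately show thesis using that by auto
qed

lemma cf_fin_nonneg: "0 \<le> cf_fin xs"
  by (induction xs) simp_all

lemma cf_fin_Cons_le_1: "1 \<le> c \<Longrightarrow> cf_fin (c # cs) \<le> 1"
  using cf_fin_nonneg[of cs] by simp

text \<open>Two Gauss steps peel off one block \<open>2,1\<close>: if the digits of \<open>z\<close> deviate from it they
  already put \<open>z\<close> above the rational, otherwise induction applies; at the end the digit
  \<open>s \<ge> 3\<close> exceeds every digit of a point of \<open>B2\<close>.\<close>
lemma cf_fin_below_B2:
  assumes "s \<ge> 3" "z \<in> B2"
  shows "cf_fin (concat (replicate l [2,1]) @ s # cs) < z"
  using assms(2)
proof (induction l arbitrary: z)
  case 0
  have "1 / z < 3"
    using B2_bounds[OF gauss_map_in_B2[OF "0"]] by (cases rule: B2_inverse_cases[OF "0"]) auto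
  then have "1 / 3 < z" using B2_bounds[OF "0"] by (simp add: divide_less_eq mult.commute)
  moreover have "1 / (real s + cf_fin cs) \<le> 1 / 3"
    using assms(1) cf_fin_nonneg[of cs] by (simp add: divide_le_eq)
  ultimately show ?case by simp
next
  case (Suc l)
  define R where "R = cf_fin (concat (replicate l [2,1]) @ s # cs)"
  have "R \<le> 1"
  proof (cases l)
    case 0
    then show ?thesis using cf_fin_Cons_le_1[of s cs] assms(1) by (simp add: R_def)
  next
    case (Suc m)
    then show ?thesis
      using cf_fin_Cons_le_1[of 2 "1 # concat (replicate m [2,1]) @ s # cs"] by (simp add: R_def)
  qed
  then have R: "0 \<le> R" "R \<le> 1" by (simp_all add: R_def cf_fin_nonneg)
  let ?t = "gauss_map z"
  have t: "?t \<in> B2" "0 < ?t" using gauss_map_in_B2[OF Suc.prems] B2_bounds by auto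
  have "1 / z < 2 + 1 / (1 + R)"
  proof (cases rule: B2_inverse_cases[OF Suc.prems])
    case 1
    moreover have "0 < 1 / (1 + R)" using R by simp
    ultimately show ?thesis using B2_bounds(2)[OF t(1)] by linarith
  next
    case 2
    have "1 + R < 1 / ?t"
    proof (cases rule: B2_inverse_cases[OF t(1)])
      case 1
      then show ?thesis using Suc.IH[OF gauss_map_in_B2[OF t(1)]] by (simp add: R_def)
    next
      case 2
      then show ?thesis using B2_bounds(1)[OF gauss_map_in_B2[OF t(1)]] R by simp
    qed
    then have "?t < 1 / (1 + R)"
      using t(2) R by (simp add: less_divide_eq divide_less_eq mult.commute)
    with 2 show ?thesis by simp
  qed
  moreover have "0 < 2 + 1 / (1 + R)" using R by (simp add: add_pos_nonneg)
  ultimately have "1 / (2 + 1 / (1 + R)) < z"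
    using B2_bounds(1)[OF Suc.prems] by (simp add: divide_less_eq less_divide_eq mult.commute)
  then show ?case by (simp add: R_def)
qed

lemma B2_gauss_map_between:
  assumes "z \<in> B2" "0 \<le> a" "0 \<le> b" "1 / (2 + b) \<le> z" "z \<le> 1 / (2 + a)"
  shows "a \<le> gauss_map z" "gauss_map z \<le> b"
proof -
  have z: "0 < z" using B2_bounds[OF assms(1)] by simp
  have "2 + a \<le> 1 / z" "1 / z \<le> 2 + b"
    using assms(2-5) z by (simp_all add: divide_le_eq le_divide_eq mult.commute)
  moreover have "1 / z = 2 + gauss_map z"
    using B2_bounds(2)[OF gauss_map_in_B2[OF assms(1)]] assms(2) \<open>2 + a \<le> 1 / z\<close>
    by (cases rule: B2_inverse_cases[OF assms(1)]) auto
  ultimately show "a \<le> gauss_map z" "gauss_map z \<le> b" by simp_all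
qed

text \<open>Prepending a digit reverses the order, so \<open>(gauss_map ^^ n)\<close> maps the interval spanned by
  the two expansions with common prefix \<open>(2)\<^sup>n\<close> into the interval spanned by the two tails, with the
  orientation given by the parity of \<open>n\<close>.\<close>
lemma B2_funpow_gauss_map_between:
  assumes "z \<in> B2" "cf_fin (replicate n 2 @ xs) \<le> z" "z \<le> cf_fin (replicate n 2 @ ys)"
  shows "(gauss_map ^^ n) z \<in> (if even n then {cf_fin xs..cf_fin ys} else {cf_fin ys..cf_fin xs})"
  using assms
proof (induction n arbitrary: z xs ys)
  case 0
  then show ?case by simp
next
  case (Suc n)
  have "cf_fin (replicate n 2 @ ys) \<le> gauss_map z" "gauss_map z \<le> cf_fin (replicate n 2 @ xs)"
    using B2_gauss_map_between[OF Suc.prems(1) cf_fin_nonneg cf_fin_nonneg] Suc.prems(2,3) by auto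
  from Suc.IH[OF gauss_map_in_B2[OF Suc.prems(1)] this] show ?case
    by (auto simp add: funpow_Suc_right simp del: funpow.simps split: if_splits)
qed

theorem mainTheorem5:
  fixes z r1 r2 :: real and k l s :: nat and as bs :: "nat list"
  assumes "0 < z" "z < 1" "z \<notin> \<rat>"
    and "r1 \<in> \<rat>" "r2 \<in> \<rat>" "0 < r1" "r1 < 1" "0 < r2" "r2 < 1"
    and "r1 \<le> z" "z \<le> r2"
    and "k \<ge> 1" "s \<ge> 3"
    and "\<forall>a\<in>set as. a \<ge> 1" "\<forall>b\<in>set bs. b \<ge> 1"
    and "(r1 = cf_fin (replicate (2*k - 1) 2 @ concat (replicate l [2,1]) @ [s] @ as) \<and>
          r2 = cf_fin (replicate (2*k - 1) 2 @ bs))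
       \<or> (r1 = cf_fin (replicate (2*k) 2 @ as) \<and>
          r2 = cf_fin (replicate (2*k) 2 @ concat (replicate l [2,1]) @ [s] @ bs))"
  shows "z \<notin> B2"
proof
  assume z: "z \<in> B2"
  have below: "cf_fin (concat (replicate l [2,1]) @ s # cs) < (gauss_map ^^ n) z" for cs n
    using cf_fin_below_B2[OF assms(13) gauss_map_funpow_in_B2[OF z]] .
  from assms(16) show False
  proof
    assume "r1 = cf_fin (replicate (2*k - 1) 2 @ concat (replicate l [2,1]) @ [s] @ as) \<and>
      r2 = cf_fin (replicate (2*k - 1) 2 @ bs)"
    moreover have "odd (2*k - 1)" using assms(12) by simp
    ultimately show False
      using B2_funpow_gauss_map_between[OF z, of "2*k - 1"] assms(10,11) below
      by (fastforce simp: not_le[symmetric])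
  next
    assume "r1 = cf_fin (replicate (2*k) 2 @ as) \<and>
      r2 = cf_fin (replicate (2*k) 2 @ concat (replicate l [2,1]) @ [s] @ bs)"
    then show False
      using B2_funpow_gauss_map_between[OF z, of "2*k"] assms(10,11) below
      by (fastforce simp: not_le[symmetric])
  qed
qed

end
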